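(* Let $X_1,\ldots,X_n$ be non-empty sets, $S\subset X_1\times\cdots\times X_n$ a finite set, and $M\subset S$ a maximal good subset of $S$. Let $C(S)$ be the space of functions on $S$, $U(S)$ the subspace of functions $f$ on $S$ of the form $f(x_1,\ldots,x_n)=u_1(x_1)+\cdots+u_n(x_n)$ on $S$ with $u_i$ functions on $\Pi_iS$, and $U(S)^\perp=\{\mu\in C(S)^*:\mu(f)=0\ \forall f\in U(S)\}$. Then $\dim U(S)^\perp=|S|-|M|$, and a basis of $U(S)^\perp$ is given by the set of measures $\mu_L$, where $L$ ranges over loops of the form $L=\{x,y_2,\ldots,y_k\}$ with $x\in S\setminus M$ and $y_2,\ldots,y_k\in M$.
   Context: $\Pi_i$ denotes the canonical projection onto $X_i$. A subset $T$ is good if every function $f$ on $T$ can be written as $f(x_1,\ldots,x_n)=u_1(x_1)+\cdots+u_n(x_n)$ on $T$ for suitable functions $u_i$ on $X_i$; $M$ is a maximal good subset of $S$ if it is good and no good subset of $S$ strictly contains it. For points $x_1,\ldots,x_k$ (with $x_j=(x_{j1},\ldots,x_{jn})$) and numbers $c_j$, the formal sum $\sum_jc_jx_j$ vanishes if for every $i$ and every $a\in X_i$, $\sum_{j:\,x_{ji}=a}c_j=0$. A non-empty finite set $L=\{x_1,\ldots,x_k\}$ of distinct points is a loop if there are non-zero integers $n_1,\ldots,n_k$ with $\sum_jn_jx_j$ vanishing and no strictly smaller non-empty subset of $L$ has this property; such integers can be taken with $\gcd=1$, uniquely up to a global sign. For such a loop, $\mu_L$ is the measure on $S$ with $\mu_L(x_j)=n_j/(|n_1|+\cdots+|n_k|)$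 and $\mu_L(x)=0$ for $x\notin L$ (for a fixed choice of sign). *)

theory Defs
  imports Complex_Main "HOL-Library.Function_Algebras" "HOL-Library.FuncSet"
begin

text \<open>Points of X_1 x ... x X_n are modelled as extensional functions
  x :: nat => 'a with x i in X i for i < n (i.e. elements of PiE {..<n} X);
  coordinate i (0-based) is x i.\<close>

definition good :: "nat \<Rightarrow> (nat \<Rightarrow> 'a) set \<Rightarrow> bool" where
  "good n T \<longleftrightarrow> (\<forall>f :: (nat \<Rightarrow> 'a) \<Rightarrow> real.
      \<exists>u :: nat \<Rightarrow> 'a \<Rightarrow> real. \<forall>x\<in>T. f x = (\<Sum>i<n. u i (x i)))"

definition maximal_good :: "nat \<Rightarrow> (nat \<Rightarrow> 'a) set \<Rightarrow> (nat \<Rightarrow> 'a) set \<Rightarrow> bool" where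
  "maximal_good n S M \<longleftrightarrow> M \<subseteq> S \<and> good n M \<and>
      (\<forall>T. M \<subset> T \<and> T \<subseteq> S \<longrightarrow> \<not> good n T)"

text \<open>The formal sum  sum_{y in L} c y * y  vanishes.\<close>
definition vanishes :: "nat \<Rightarrow> (nat \<Rightarrow> 'a set) \<Rightarrow> ((nat \<Rightarrow> 'a) \<Rightarrow> int) \<Rightarrow> (nat \<Rightarrow> 'a) set \<Rightarrow> bool" where
  "vanishes n X c L \<longleftrightarrow> (\<forall>i<n. \<forall>a\<in>X i. (\<Sum>y\<in>{y\<in>L. y i = a}. c y) = 0)"

definition has_vanishing_coeffs :: "nat \<Rightarrow> (nat \<Rightarrow> 'a set) \<Rightarrow> (nat \<Rightarrow> 'a) set \<Rightarrow> bool" where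
  "has_vanishing_coeffs n X L \<longleftrightarrow> (\<exists>c. (\<forall>y\<in>L. c y \<noteq> 0) \<and> vanishes n X c L)"

definition is_loop :: "nat \<Rightarrow> (nat \<Rightarrow> 'a set) \<Rightarrow> (nat \<Rightarrow> 'a) set \<Rightarrow> bool" where
  "is_loop n X L \<longleftrightarrow> finite L \<and> L \<noteq> {} \<and> has_vanishing_coeffs n X L \<and>
      (\<forall>L'. L' \<subset> L \<and> L' \<noteq> {} \<longrightarrow> \<not> has_vanishing_coeffs n X L')"

text \<open>mu is (one of the two sign choices of) the measure mu_L of the loop L.\<close>
definition is_loop_measure :: "nat \<Rightarrow> (nat \<Rightarrow> 'a set) \<Rightarrow> (nat \<Rightarrow> 'a) set \<Rightarrow> ((nat \<Rightarrow> 'a) \<Rightarrow> real) \<Rightarrow> bool" where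
  "is_loop_measure n X L \<mu> \<longleftrightarrow> (\<exists>c :: (nat \<Rightarrow> 'a) \<Rightarrow> int.
      (\<forall>y\<in>L. c y \<noteq> 0) \<and> vanishes n X c L \<and> Gcd (c ` L) = 1 \<and>
      \<mu> = (\<lambda>x. if x \<in> L then real_of_int (c x) / real_of_int (\<Sum>y\<in>L. \<bar>c y\<bar>) else 0))"

definition U_space :: "nat \<Rightarrow> (nat \<Rightarrow> 'a) set \<Rightarrow> ((nat \<Rightarrow> 'a) \<Rightarrow> real) set" where
  "U_space n S = {f. \<exists>u :: nat \<Rightarrow> 'a \<Rightarrow> real. \<forall>x\<in>S. f x = (\<Sum>i<n. u i (x i))}"

text \<open>Linear functionals on C(S) (S finite) are identified with functions
  mu on points vanishing outside S, acting by mu(f) = sum_{x in S} mu x * f x.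
  U(S)^perp is the annihilator of U(S).\<close>
definition U_perp :: "nat \<Rightarrow> (nat \<Rightarrow> 'a) set \<Rightarrow> ((nat \<Rightarrow> 'a) \<Rightarrow> real) set" where
  "U_perp n S = {\<mu>. (\<forall>x. x \<notin> S \<longrightarrow> \<mu> x = 0) \<and>
      (\<forall>f\<in>U_space n S. (\<Sum>x\<in>S. \<mu> x * f x) = 0)}"

definition fscale :: "real \<Rightarrow> ('b \<Rightarrow> real) \<Rightarrow> ('b \<Rightarrow> real)" where
  "fscale c f = (\<lambda>x. c * f x)"

end

theory Submission
  imports Defs
begin

text \<open>A measure lies in U(T)^perp iff it is supported in T and its masses sum to zero along
  every coordinate hyperplane; a good set carries no such measure except 0. Hence a measure in
  U(S)^perp vanishing on S - M is zero: evaluation on S - M is injective on U(S)^perp.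
  For x in S - M the set M + x is not good, and interpolating on M yields a measure in
  U(M + x)^perp with mass 1 at x. A Q-linear projection R \<rightarrow> Q and clearing denominators make its
  coefficients integral, and a minimal subset with vanishing integer coefficients is a loop through x
  whose other points lie in M. Two such loops carry proportional measures, so the loop is unique.
  Thus each mu_L is nonzero at exactly one point of S - M and each point of S - M belongs to exactly
  one loop, which makes the mu_L a basis of U(S)^perp with |S - M| elements.\<close>

interpretation fscale: vector_space fscale
  by unfold_locales (auto simp: fscale_def algebra_simps fun_eq_iff)

lemma sum_fun_apply: "(\<Sum>v\<in>A. f v) x = (\<Sum>v\<in>A. f v x)"
  by (induction A rule: infinite_finite_induct) auto

section \<open>Bases from pivots\<close>

locale pivot_family =
  fixes I :: "'i set" and P :: "'b set" and v :: "'i \<Rightarrow> 'b \<Rightarrow> real"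
  assumes finite_pivots: "finite P"
    and pivot_ex1: "\<And>i. i \<in> I \<Longrightarrow> \<exists>!p\<in>P. v i p \<noteq> 0"
    and index_ex1: "\<And>p. p \<in> P \<Longrightarrow> \<exists>!i\<in>I. v i p \<noteq> 0"
begin

definition pivot :: "'i \<Rightarrow> 'b" where
  "pivot i = (THE p. p \<in> P \<and> v i p \<noteq> 0)"

lemma pivot:
  assumes "i \<in> I"
  shows "pivot i \<in> P" "v i (pivot i) \<noteq> 0"
  using theI'[OF pivot_ex1[OF assms]] unfolding pivot_def by blast+

lemma pivot_unique: "i \<in> I \<Longrightarrow> p \<in> P \<Longrightarrow> v i p \<noteq> 0 \<Longrightarrow> p = pivot i"
  using pivot pivot_ex1 by blast

lemma index_unique: "i \<in> I \<Longrightarrow> j \<in> I \<Longrightarrow> p \<in> P \<Longrightarrow> v i p \<noteq> 0 \<Longrightarrow> v j p \<noteq> 0 \<Longrightarrow> i = j"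
  using index_ex1 by blast

lemma bij_betw_pivot: "bij_betw pivot I P"
proof (rule bij_betw_imageI)
  show "inj_on pivot I"
    using pivot index_unique by (metis inj_onI)
  show "pivot ` I = P"
    using pivot pivot_unique index_ex1 by blast
qed

lemma finite_index: "finite I"
  using bij_betw_finite bij_betw_pivot finite_pivots by blast

lemma inj_on_family: "inj_on v I"
proof (rule inj_onI)
  fix i j assume "i \<in> I" "j \<in> I" "v i = v j"
  then show "i = j"
    using index_unique[of i j "pivot i"] pivot[of i] by simp
qed

lemma sum_at_pivot:
  assumes "j \<in> I"
  shows "(\<Sum>i\<in>I. c i * v i (pivot j)) = c j * v j (pivot j)"
proof -
  have "v i (pivot j) = 0" if "i \<in> I" "i \<noteq> j" for i
    using index_unique[OF that(1) assms pivot(1)[OF assms]] pivot(2)[OF assms] that(2) by blast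
  then have "(\<Sum>i\<in>I. c i * v i (pivot j)) = (\<Sum>i\<in>I. if i = j then c j * v j (pivot j) else 0)"
    by (intro sum.cong) auto
  then show ?thesis
    using assms finite_index by simp
qed

lemma independent: "\<not> fscale.dependent (v ` I)"
proof
  assume "fscale.dependent (v ` I)"
  then obtain c where "\<exists>b\<in>v ` I. c b \<noteq> 0" "(\<Sum>b\<in>v ` I. fscale (c b) b) = 0"
    using fscale.dependent_finite finite_index by blast
  then obtain j where j: "j \<in> I" "c (v j) \<noteq> 0" and comb: "(\<Sum>i\<in>I. fscale (c (v i)) (v i)) = 0"
    by (auto simp: sum.reindex[OF inj_on_family])
  have "(\<Sum>i\<in>I. c (v i) * v i (pivot j)) = 0"
    using fun_cong[OF comb, of "pivot j"] by (simp add: sum_fun_apply fscale_def)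
  then show False
    using sum_at_pivot[OF j(1)] j(2) pivot(2)[OF j(1)] by simp
qed

lemma span_eq:
  assumes "fscale.subspace V" "v ` I \<subseteq> V" "\<And>w. w \<in> V \<Longrightarrow> \<forall>p\<in>P. w p = 0 \<Longrightarrow> w = 0"
  shows "fscale.span (v ` I) = V"
proof
  show span_V: "fscale.span (v ` I) \<subseteq> V"
    using fscale.span_minimal assms(1,2) by blast
  show "V \<subseteq> fscale.span (v ` I)"
  proof
    fix w assume "w \<in> V"
    define F where "F = (\<Sum>i\<in>I. fscale (w (pivot i) / v i (pivot i)) (v i))"
    have F: "F \<in> fscale.span (v ` I)"
      unfolding F_def by (intro fscale.span_sum fscale.span_scale fscale.span_base) auto
    have F_pivot: "F (pivot j) = w (pivot j)" if "j \<in> I" for j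
      using sum_at_pivot[OF that, of "\<lambda>i. w (pivot i) / v i (pivot i)"] pivot(2)[OF that]
      by (simp add: F_def sum_fun_apply fscale_def)
    have "\<forall>p\<in>P. (w - F) p = 0"
    proof
      fix p assume "p \<in> P"
      then obtain j where "j \<in> I" "p = pivot j"
        using bij_betw_pivot unfolding bij_betw_def by blast
      then show "(w - F) p = 0"
        using F_pivot by simp
    qed
    moreover have "w - F \<in> V"
      using \<open>w \<in> V\<close> F span_V assms(1) by (blast intro: fscale.subspace_diff)
    ultimately have "w = F"
      using assms(3) by fastforce
    with F show "w \<in> fscale.span (v ` I)"
      by simp
  qed
qed

lemma dim_eq:
  assumes "fscale.subspace V" "v ` I \<subseteq> V" "\<And>w. w \<in> V \<Longrightarrow> \<forall>p\<in>P. w p = 0 \<Longrightarrow> w = 0"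
  shows "fscale.dim V = card P"
proof (rule fscale.dim_unique)
  show "v ` I \<subseteq> V" "V \<subseteq> fscale.span (v ` I)" "fscale.independent (v ` I)"
    using assms span_eq independent by auto
  show "card (v ` I) = card P"
    using card_image[OF inj_on_family] bij_betw_same_card[OF bij_betw_pivot] by simp
qed

end

lemma U_space_iff: "f \<in> U_space n T \<longleftrightarrow> (\<exists>g\<in>U_space n UNIV. \<forall>x\<in>T. f x = g x)"
  unfolding U_space_def by auto

lemma U_space_antimono: "T \<subseteq> S \<Longrightarrow> U_space n S \<subseteq> U_space n T"
  unfolding U_space_def by blast

lemma subspace_U_space: "fscale.subspace (U_space n T)"
proof (rule fscale.subspaceI)
  show "0 \<in> U_space n T"
    unfolding U_space_def by (auto intro: exI[of _ "\<lambda>_ _. 0"])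
next
  fix f g assume "f \<in> U_space n T" "g \<in> U_space n T"
  then obtain u v where "\<forall>x\<in>T. f x = (\<Sum>i<n. u i (x i))" "\<forall>x\<in>T. g x = (\<Sum>i<n. v i (x i))"
    unfolding U_space_def by blast
  then show "f + g \<in> U_space n T"
    unfolding U_space_def by (auto intro!: exI[of _ "\<lambda>i b. u i b + v i b"] simp: sum.distrib)
next
  fix c f assume "f \<in> U_space n T"
  then obtain u where "\<forall>x\<in>T. f x = (\<Sum>i<n. u i (x i))"
    unfolding U_space_def by blast
  then show "fscale c f \<in> U_space n T"
    unfolding U_space_def fscale_def by (auto intro!: exI[of _ "\<lambda>i b. c * u i b"] simp: sum_distrib_left)
qed

lemma coordinate_indicator_in_U_space:
  assumes "i < n"
  shows "(\<lambda>z. if z i = a then 1 else 0) \<in> U_space n T"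
proof -
  have "(\<Sum>j<n. if j = i then (if z j = a then 1 else 0) else 0) = (if z i = a then 1 else (0::real))"
    for z :: "nat \<Rightarrow> 'a"
    using assms by (simp add: sum.delta)
  then show ?thesis
    unfolding U_space_def by (auto intro!: exI[of _ "\<lambda>j b. if j = i then (if b = a then 1 else 0) else 0"])
qed

lemma good_iff_U_space: "good n T \<longleftrightarrow> U_space n T = UNIV"
  unfolding good_def U_space_def by auto

lemma good_subset: "good n M \<Longrightarrow> T \<subseteq> M \<Longrightarrow> good n T"
  unfolding good_def by blast

lemma good_insertI:
  assumes "good n M" "g \<in> U_space n UNIV" "\<forall>z\<in>M. g z = 0" "g x \<noteq> 0"
  shows "good n (insert x M)"
proof -
  have "f \<in> U_space n (insert x M)" for f
  proof -
    obtain h where h: "h \<in> U_space n UNIV" "\<forall>z\<in>M. f z = h z"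
      using assms(1) U_space_iff[of f n M] by (auto simp: good_iff_U_space)
    define t where "t = (f x - h x) / g x"
    have "h + fscale t g \<in> U_space n UNIV"
      using subspace_U_space h(1) assms(2) by (blast intro: fscale.subspace_add fscale.subspace_scale)
    moreover have "\<forall>z\<in>insert x M. f z = (h + fscale t g) z"
      using h(2) assms(3,4) by (auto simp: t_def fscale_def)
    ultimately show "f \<in> U_space n (insert x M)"
      unfolding U_space_iff[of f] by blast
  qed
  then show ?thesis
    unfolding good_iff_U_space by blast
qed

lemma subspace_U_perp: "fscale.subspace (U_perp n S)"
proof (rule fscale.subspaceI)
  show "0 \<in> U_perp n S"
    unfolding U_perp_def by simp
next
  fix \<mu> \<nu> assume "\<mu> \<in> U_perp n S" "\<nu> \<in> U_perp n S"
  then show "\<mu> + \<nu> \<in> U_perp n S"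
    unfolding U_perp_def by (simp add: distrib_right sum.distrib)
next
  fix c \<mu> assume "\<mu> \<in> U_perp n S"
  then show "fscale c \<mu> \<in> U_perp n S"
    unfolding U_perp_def fscale_def by (simp add: mult.assoc sum_distrib_left[symmetric])
qed

lemma U_perp_subset_iff:
  assumes "finite S" "T \<subseteq> S"
  shows "\<mu> \<in> U_perp n T \<longleftrightarrow> \<mu> \<in> U_perp n S \<and> (\<forall>x\<in>S - T. \<mu> x = 0)"
proof -
  have sum_eq: "(\<Sum>x\<in>S. \<mu> x * f x) = (\<Sum>x\<in>T. \<mu> x * f x)" if "\<forall>x\<in>S - T. \<mu> x = 0" for f
    using that by (intro sum.mono_neutral_right assms) auto
  show ?thesis
  proof
    assume \<mu>: "\<mu> \<in> U_perp n T"
    then have "\<forall>x\<in>S - T. \<mu> x = 0"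
      unfolding U_perp_def by blast
    moreover have "(\<Sum>x\<in>S. \<mu> x * f x) = 0" if "f \<in> U_space n S" for f
      using \<mu> that U_space_antimono[OF assms(2)] unfolding U_perp_def sum_eq[OF \<open>\<forall>x\<in>S - T. \<mu> x = 0\<close>] by blast
    ultimately show "\<mu> \<in> U_perp n S \<and> (\<forall>x\<in>S - T. \<mu> x = 0)"
      using \<mu> assms(2) unfolding U_perp_def by blast
  next
    assume \<mu>: "\<mu> \<in> U_perp n S \<and> (\<forall>x\<in>S - T. \<mu> x = 0)"
    have "(\<Sum>x\<in>T. \<mu> x * f x) = 0" if "f \<in> U_space n T" for f
    proof -
      obtain g where g: "g \<in> U_space n UNIV" "\<forall>x\<in>T. f x = g x"
        using \<open>f \<in> U_space n T\<close> U_space_iff by blast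
      have "(\<Sum>x\<in>T. \<mu> x * f x) = (\<Sum>x\<in>S. \<mu> x * g x)"
        using g(2) \<mu> by (simp add: sum_eq)
      also have "\<dots> = 0"
        using \<mu> g(1) U_space_antimono[of S UNIV] unfolding U_perp_def by blast
      finally show ?thesis .
    qed
    with \<mu> show "\<mu> \<in> U_perp n T"
      unfolding U_perp_def by blast
  qed
qed

lemma U_perp_good_eq_0:
  assumes "finite T" "good n T" "\<mu> \<in> U_perp n T"
  shows "\<mu> = 0"
proof (rule ext)
  fix y
  show "\<mu> y = 0 y"
  proof (cases "y \<in> T")
    case True
    have "(\<lambda>z. if z = y then 1 else 0) \<in> U_space n T"
      using assms(2) by (simp add: good_iff_U_space)
    then have "(\<Sum>z\<in>T. \<mu> z * (if z = y then 1 else 0)) = 0"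
      using assms(3) unfolding U_perp_def by force
    then show ?thesis
      using True assms(1) by (simp add: if_distrib cong: if_cong)
  next
    case False
    then show ?thesis
      using assms(3) unfolding U_perp_def by simp
  qed
qed

lemma U_perp_eq_0_if_vanishes_off_good:
  assumes "finite S" "M \<subseteq> S" "good n M" "\<mu> \<in> U_perp n S" "\<forall>x\<in>S - M. \<mu> x = 0"
  shows "\<mu> = 0"
  using assms U_perp_subset_iff[OF assms(1,2)] U_perp_good_eq_0 finite_subset by metis

lemma U_perp_proportional:
  assumes "finite S" "M \<subseteq> S" "good n M" "\<mu> \<in> U_perp n S" "\<nu> \<in> U_perp n S" "\<mu> x \<noteq> 0"
    and "\<forall>y\<in>S - M - {x}. \<mu> y = 0 \<and> \<nu> y = 0"
  shows "\<nu> = fscale (\<nu> x / \<mu> x) \<mu>"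
proof -
  let ?w = "\<nu> - fscale (\<nu> x / \<mu> x) \<mu>"
  have "?w \<in> U_perp n S"
    using subspace_U_perp assms(4,5) by (blast intro: fscale.subspace_diff fscale.subspace_scale)
  moreover have "\<forall>y\<in>S - M. ?w y = 0"
  proof
    fix y assume "y \<in> S - M"
    then show "?w y = 0"
      using assms(6,7) by (cases "y = x") (auto simp: fscale_def)
  qed
  ultimately have "?w = 0"
    using U_perp_eq_0_if_vanishes_off_good assms(1-3) by blast
  then show ?thesis
    by simp
qed

text \<open>Interpolating the point masses of the good set M at x expresses every additive function's
  value at x through its values on M; the coefficients give the annihilating measure.\<close>

lemma U_perp_insert_if_not_good:
  assumes "finite M" "good n M" "\<not> good n (insert x M)"
  shows "\<exists>\<mu>\<in>U_perp n (insert x M). \<mu> x = 1"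
proof -
  have "x \<notin> M"
    using assms(2,3) by (metis insert_absorb)
  have "\<forall>y\<in>M. \<exists>e\<in>U_space n UNIV. \<forall>z\<in>M. (if z = y then 1 else 0) = e z"
    using assms(2) U_space_iff[of "\<lambda>z. if z = _ then 1 else 0" n M] by (simp add: good_iff_U_space)
  then obtain e where e: "\<And>y. y \<in> M \<Longrightarrow> e y \<in> U_space n UNIV"
    and e_delta: "\<And>y z. y \<in> M \<Longrightarrow> z \<in> M \<Longrightarrow> e y z = (if z = y then 1 else 0)"
    by metis
  have expand: "g x = (\<Sum>y\<in>M. g y * e y x)" if g: "g \<in> U_space n UNIV" for g
  proof -
    define h where "h = g - (\<Sum>y\<in>M. fscale (g y) (e y))"
    have "h \<in> U_space n UNIV"
      unfolding h_def using subspace_U_space g e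
      by (blast intro: fscale.subspace_diff fscale.subspace_sum fscale.subspace_scale)
    moreover have "\<forall>z\<in>M. h z = 0"
      using assms(1) by (simp add: h_def sum_fun_apply fscale_def e_delta if_distrib cong: if_cong)
    ultimately have "h x = 0"
      using good_insertI assms(2,3) by blast
    then show ?thesis
      by (simp add: h_def sum_fun_apply fscale_def)
  qed
  define \<mu> where "\<mu> z = (if z = x then 1 else if z \<in> M then - e z x else 0)" for z
  have "\<mu> \<in> U_perp n (insert x M)"
    unfolding U_perp_def
  proof (intro CollectI conjI allI impI ballI)
    fix z assume "z \<notin> insert x M"
    then show "\<mu> z = 0"
      by (simp add: \<mu>_def)
  next
    fix f assume "f \<in> U_space n (insert x M)"
    then obtain g where g: "g \<in> U_space n UNIV" "\<forall>z\<in>insert x M. f z = g z"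
      using U_space_iff by blast
    have "(\<Sum>z\<in>insert x M. \<mu> z * f z) = g x - (\<Sum>y\<in>M. g y * e y x)"
      using assms(1) \<open>x \<notin> M\<close> g(2)
      by (auto simp: \<mu>_def sum_negf[symmetric] intro!: sum.cong)
    also have "\<dots> = 0"
      using expand[OF g(1)] by simp
    finally show "(\<Sum>z\<in>insert x M. \<mu> z * f z) = 0" .
  qed
  moreover have "\<mu> x = 1"
    by (simp add: \<mu>_def)
  ultimately show ?thesis
    by blast
qed

definition real_vanishes :: "nat \<Rightarrow> (nat \<Rightarrow> 'a set) \<Rightarrow> ((nat \<Rightarrow> 'a) \<Rightarrow> real) \<Rightarrow> (nat \<Rightarrow> 'a) set \<Rightarrow> bool" where
  "real_vanishes n X c L \<longleftrightarrow> (\<forall>i<n. \<forall>a\<in>X i. (\<Sum>y\<in>{y\<in>L. y i = a}. c y) = 0)"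

lemma real_vanishes_cong:
  "(\<And>y. y \<in> L \<Longrightarrow> c y = c' y) \<Longrightarrow> real_vanishes n X c L \<longleftrightarrow> real_vanishes n X c' L"
  unfolding real_vanishes_def by simp

lemma real_vanishes_of_int_iff: "real_vanishes n X (\<lambda>y. of_int (c y)) L \<longleftrightarrow> vanishes n X c L"
  unfolding real_vanishes_def vanishes_def by (simp flip: of_int_sum)

lemma real_vanishes_orthogonal:
  assumes "finite S" "S \<subseteq> PiE {..<n} X" "real_vanishes n X \<mu> S"
  shows "(\<Sum>y\<in>S. \<mu> y * (\<Sum>i<n. u i (y i))) = 0"
proof -
  have "(\<Sum>y\<in>S. \<mu> y * u i (y i)) = 0" if "i < n" for i
  proof -
    have "(\<Sum>y\<in>S. \<mu> y * u i (y i)) = (\<Sum>a\<in>(\<lambda>y. y i) ` S. \<Sum>y\<in>{y\<in>S. y i = a}. \<mu> y * u i (y i))"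
      using assms(1) by (intro sum.group[symmetric]) auto
    also have "\<dots> = (\<Sum>a\<in>(\<lambda>y. y i) ` S. u i a * (\<Sum>y\<in>{y\<in>S. y i = a}. \<mu> y))"
      by (auto simp: sum_distrib_left mult.commute intro!: sum.cong)
    also have "\<dots> = 0"
      using assms(2,3) that unfolding real_vanishes_def by (auto simp: PiE_iff intro!: sum.neutral)
    finally show ?thesis .
  qed
  then show ?thesis
    by (simp add: sum_distrib_left sum.swap[where A = S])
qed

lemma U_perp_iff_real_vanishes:
  assumes "finite S" "S \<subseteq> PiE {..<n} X"
  shows "\<mu> \<in> U_perp n S \<longleftrightarrow> (\<forall>x. x \<notin> S \<longrightarrow> \<mu> x = 0) \<and> real_vanishes n X \<mu> S"
proof
  assume \<mu>: "\<mu> \<in> U_perp n S"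
  have "(\<Sum>y\<in>{y\<in>S. y i = a}. \<mu> y) = 0" if "i < n" for i a
  proof -
    have "(\<Sum>y\<in>S. \<mu> y * (if y i = a then 1 else 0)) = 0"
      using \<mu> coordinate_indicator_in_U_space[OF that] unfolding U_perp_def by force
    then show ?thesis
      using assms(1) by (simp add: sum.inter_filter if_distrib cong: if_cong)
  qed
  with \<mu> show "(\<forall>x. x \<notin> S \<longrightarrow> \<mu> x = 0) \<and> real_vanishes n X \<mu> S"
    unfolding U_perp_def real_vanishes_def by blast
next
  assume "(\<forall>x. x \<notin> S \<longrightarrow> \<mu> x = 0) \<and> real_vanishes n X \<mu> S"
  then show "\<mu> \<in> U_perp n S"
    using real_vanishes_orthogonal[OF assms] unfolding U_perp_def U_space_def by auto
qed

section \<open>Integer coefficients and loops\<close>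

lemma U_perp_if_has_vanishing_coeffs:
  assumes "has_vanishing_coeffs n X L" "finite L" "L \<subseteq> PiE {..<n} X"
  obtains \<mu> where "\<mu> \<in> U_perp n L" "\<And>y. \<mu> y \<noteq> 0 \<longleftrightarrow> y \<in> L"
proof -
  obtain c where c: "\<forall>y\<in>L. c y \<noteq> 0" "vanishes n X c L"
    using assms(1) unfolding has_vanishing_coeffs_def by blast
  define \<mu> where "\<mu> y = (if y \<in> L then real_of_int (c y) else 0)" for y
  have "real_vanishes n X \<mu> L"
    using c(2) real_vanishes_cong[of L \<mu> "\<lambda>y. of_int (c y)"] by (simp add: \<mu>_def real_vanishes_of_int_iff)
  then have "\<mu> \<in> U_perp n L"
    unfolding U_perp_iff_real_vanishes[OF assms(2,3)] by (simp add: \<mu>_def)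
  moreover have "\<mu> y \<noteq> 0 \<longleftrightarrow> y \<in> L" for y
    using c(1) by (simp add: \<mu>_def)
  ultimately show thesis
    using that by blast
qed

lemma not_good_if_has_vanishing_coeffs:
  assumes "has_vanishing_coeffs n X L" "finite L" "L \<noteq> {}" "L \<subseteq> PiE {..<n} X"
  shows "\<not> good n L"
proof
  assume "good n L"
  obtain \<mu> where "\<mu> \<in> U_perp n L" "\<And>y. \<mu> y \<noteq> 0 \<longleftrightarrow> y \<in> L"
    using U_perp_if_has_vanishing_coeffs assms(1,2,4) by blast
  with \<open>good n L\<close> assms(2,3) U_perp_good_eq_0 show False
    by (metis all_not_in_conv zero_fun_def)
qed

lemma exists_additive_rat_projection: "\<exists>\<phi> :: real \<Rightarrow> rat. additive \<phi> \<and> \<phi> 1 = 1"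
proof -
  interpret real_over_rat: vector_space "\<lambda>q r. of_rat q * r :: real"
    by unfold_locales (auto simp: algebra_simps of_rat_add of_rat_mult)
  interpret rat_over_rat: vector_space "(*) :: rat \<Rightarrow> rat \<Rightarrow> rat"
    by unfold_locales (auto simp: algebra_simps)
  interpret vector_space_pair "\<lambda>q r. of_rat q * r :: real" "(*) :: rat \<Rightarrow> rat \<Rightarrow> rat"
    by unfold_locales
  have indep: "real_over_rat.independent {1}"
    by simp
  define \<phi> where "\<phi> = construct {1} (\<lambda>_. 1)"
  have "Vector_Spaces.linear (\<lambda>q r. of_rat q * r :: real) (*) \<phi>"
    unfolding \<phi>_def by (rule linear_construct[OF indep])
  then have "additive \<phi>"
    by unfold_locales (rule linear_add)
  moreover have "\<phi> 1 = 1"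
    unfolding \<phi>_def by (rule construct_basis[OF indep]) simp
  ultimately show ?thesis
    by blast
qed

lemma rat_common_denominator:
  fixes A :: "rat set"
  assumes "finite A"
  shows "\<exists>d::int. d > 0 \<and> (\<forall>q\<in>A. of_int d * q \<in> \<int>)"
proof (intro exI conjI ballI)
  let ?d = "\<Prod>q\<in>A. snd (quotient_of q)"
  show "?d > 0"
    by (intro prod_pos) (simp add: quotient_of_denom_pos')
  fix q assume "q \<in> A"
  obtain a b where ab: "quotient_of q = (a, b)"
    by fastforce
  have "b dvd ?d"
    using assms \<open>q \<in> A\<close> ab by (metis dvd_prodI snd_conv)
  then have "of_int ?d * q = of_int (?d div b * a)"
    using quotient_of_denom_pos[OF ab] by (simp add: quotient_of_div[OF ab] of_int_div)
  then show "of_int ?d * q \<in> \<int>"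
    by simp
qed

lemma has_vanishing_coeffs_if_real_vanishes:
  assumes "finite T" "real_vanishes n X \<mu> T" "x \<in> T" "\<mu> x = 1"
  shows "\<exists>K\<subseteq>T. x \<in> K \<and> has_vanishing_coeffs n X K"
proof -
  obtain \<phi> :: "real \<Rightarrow> rat" where \<phi>: "additive \<phi>" "\<phi> 1 = 1"
    using exists_additive_rat_projection by blast
  obtain d :: int where d: "d > 0" "\<forall>q\<in>(\<phi> \<circ> \<mu>) ` T. of_int d * q \<in> \<int>"
    using rat_common_denominator assms(1) by (meson finite_imageI)
  then have "\<forall>y\<in>T. \<exists>k. of_int k = of_int d * \<phi> (\<mu> y)"
    by (auto elim!: Ints_cases)
  then obtain c :: "_ \<Rightarrow> int" where c: "\<And>y. y \<in> T \<Longrightarrow> of_int (c y) = of_int d * \<phi> (\<mu> y)"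
    by metis
  have "vanishes n X c T"
    unfolding vanishes_def
  proof (intro allI impI ballI)
    fix i a assume "i < n" "a \<in> X i"
    then have "(\<Sum>y\<in>{y\<in>T. y i = a}. \<mu> y) = 0"
      using assms(2) unfolding real_vanishes_def by blast
    then have "(of_int (\<Sum>y\<in>{y\<in>T. y i = a}. c y) :: rat) = 0"
      by (simp add: of_int_sum c sum_distrib_left[symmetric] additive.sum[OF \<phi>(1), symmetric]
          additive.zero[OF \<phi>(1)])
    then show "(\<Sum>y\<in>{y\<in>T. y i = a}. c y) = 0"
      by (simp only: of_int_eq_0_iff)
  qed
  define K where "K = {y\<in>T. c y \<noteq> 0}"
  have "vanishes n X c K"
    unfolding vanishes_def
  proof (intro allI impI ballI)
    fix i a assume "i < n" "a \<in> X i"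
    have "(\<Sum>y\<in>{y\<in>K. y i = a}. c y) = (\<Sum>y\<in>{y\<in>T. y i = a}. c y)"
      using assms(1) by (intro sum.mono_neutral_left) (auto simp: K_def)
    then show "(\<Sum>y\<in>{y\<in>K. y i = a}. c y) = 0"
      using \<open>vanishes n X c T\<close> \<open>i < n\<close> \<open>a \<in> X i\<close> unfolding vanishes_def by simp
  qed
  moreover have "\<forall>y\<in>K. c y \<noteq> 0"
    by (simp add: K_def)
  ultimately have "has_vanishing_coeffs n X K"
    unfolding has_vanishing_coeffs_def by blast
  moreover have "c x \<noteq> 0"
    using c[OF assms(3)] d(1) \<phi>(2) assms(4) by fastforce
  then have "x \<in> K" "K \<subseteq> T"
    using assms(3) by (auto simp: K_def)
  ultimately show ?thesis
    by blast
qed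

lemma is_loopD:
  assumes "is_loop n X L"
  shows "finite L" "L \<noteq> {}" "has_vanishing_coeffs n X L"
  using assms unfolding is_loop_def by blast+

lemma exists_loop_subset:
  assumes "finite K" "K \<noteq> {}" "has_vanishing_coeffs n X K"
  shows "\<exists>L\<subseteq>K. is_loop n X L"
  using assms
proof (induction K rule: finite_psubset_induct)
  case (psubset K)
  show ?case
  proof (cases "is_loop n X K")
    case False
    then obtain L where "L \<subset> K" "L \<noteq> {}" "has_vanishing_coeffs n X L"
      using psubset.prems psubset.hyps(1) unfolding is_loop_def by blast
    then show ?thesis
      using psubset.IH[of L] psubset.hyps(1) by (meson finite_subset psubset_imp_subset order_trans)
  qed blast
qed

lemma is_loop_measure_nonzero_iff:
  assumes "is_loop_measure n X L \<mu>" "finite L"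
  shows "\<mu> y \<noteq> 0 \<longleftrightarrow> y \<in> L"
proof -
  obtain c :: "_ \<Rightarrow> int" where c: "\<forall>y\<in>L. c y \<noteq> 0"
    and \<mu>: "\<mu> = (\<lambda>x. if x \<in> L then of_int (c x) / of_int (\<Sum>y\<in>L. \<bar>c y\<bar>) else 0)"
    using assms(1) unfolding is_loop_measure_def by blast
  have "(\<Sum>y\<in>L. \<bar>c y\<bar>) > 0" if "y \<in> L"
    using c assms(2) that by (intro sum_pos2) auto
  then show ?thesis
    using c by (auto simp: \<mu> simp del: of_int_sum of_int_abs)
qed

lemma is_loop_measure_in_U_perp:
  assumes "is_loop_measure n X L \<mu>" "finite S" "S \<subseteq> PiE {..<n} X" "L \<subseteq> S"
  shows "\<mu> \<in> U_perp n S"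
proof -
  have L: "finite L" "L \<subseteq> PiE {..<n} X"
    using assms(2-4) finite_subset by blast+
  obtain c :: "_ \<Rightarrow> int" where c: "vanishes n X c L"
    and \<mu>: "\<mu> = (\<lambda>x. if x \<in> L then of_int (c x) / of_int (\<Sum>y\<in>L. \<bar>c y\<bar>) else 0)"
    using assms(1) unfolding is_loop_measure_def by blast
  define D where "D = real_of_int (\<Sum>y\<in>L. \<bar>c y\<bar>)"
  have "real_vanishes n X (\<lambda>y. of_int (c y)) L"
    using c by (simp add: real_vanishes_of_int_iff)
  then have "real_vanishes n X (\<lambda>y. of_int (c y) / D) L"
    unfolding real_vanishes_def by (simp add: sum_divide_distrib[symmetric])
  then have "real_vanishes n X \<mu> L"
    using real_vanishes_cong[of L \<mu> "\<lambda>y. of_int (c y) / D"] by (simp add: \<mu> D_def)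
  then have "\<mu> \<in> U_perp n L"
    unfolding U_perp_iff_real_vanishes[OF L] by (simp add: \<mu>)
  then show ?thesis
    using U_perp_subset_iff[OF assms(2,4)] by blast
qed

lemma has_vanishing_coeffs_insert_good_unique:
  assumes "finite S" "S \<subseteq> PiE {..<n} X" "M \<subseteq> S" "good n M" "x \<in> S - M"
    and "has_vanishing_coeffs n X L1" "x \<in> L1" "L1 \<subseteq> insert x M"
    and "has_vanishing_coeffs n X L2" "x \<in> L2" "L2 \<subseteq> insert x M"
  shows "L1 = L2"
proof -
  have sub: "L1 \<subseteq> S" "L2 \<subseteq> S"
    using assms(3,5,8,11) by blast+
  then have fin: "finite L1" "finite L2"
    using assms(1) finite_subset by blast+
  obtain \<mu>1 where \<mu>1: "\<mu>1 \<in> U_perp n L1" "\<And>y. \<mu>1 y \<noteq> 0 \<longleftrightarrow> y \<in> L1"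
    using U_perp_if_has_vanishing_coeffs assms(2,6) fin(1) sub(1) by (metis order_trans)
  obtain \<mu>2 where \<mu>2: "\<mu>2 \<in> U_perp n L2" "\<And>y. \<mu>2 y \<noteq> 0 \<longleftrightarrow> y \<in> L2"
    using U_perp_if_has_vanishing_coeffs assms(2,9) fin(2) sub(2) by (metis order_trans)
  have "\<mu>1 \<in> U_perp n S" "\<mu>2 \<in> U_perp n S"
    using U_perp_subset_iff[OF assms(1)] sub \<mu>1(1) \<mu>2(1) by blast+
  moreover have "\<mu>1 x \<noteq> 0" "\<mu>2 x \<noteq> 0"
    using \<mu>1(2) \<mu>2(2) assms(7,10) by blast+
  moreover have "\<forall>y\<in>S - M - {x}. \<mu>1 y = 0 \<and> \<mu>2 y = 0"
    using \<mu>1(2) \<mu>2(2) assms(8,11) by blast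
  ultimately have proportional: "\<mu>2 = fscale (\<mu>2 x / \<mu>1 x) \<mu>1"
    using U_perp_proportional assms(1,3,4) by blast
  have "\<mu>2 y \<noteq> 0 \<longleftrightarrow> \<mu>1 y \<noteq> 0" for y
    using fun_cong[OF proportional, of y] \<open>\<mu>1 x \<noteq> 0\<close> \<open>\<mu>2 x \<noteq> 0\<close> by (simp add: fscale_def)
  then show ?thesis
    using \<mu>1(2) \<mu>2(2) by blast
qed

section \<open>Fundamental loops of a maximal good set\<close>

definition fundamental_loops ::
    "nat \<Rightarrow> (nat \<Rightarrow> 'a set) \<Rightarrow> (nat \<Rightarrow> 'a) set \<Rightarrow> (nat \<Rightarrow> 'a) set \<Rightarrow> (nat \<Rightarrow> 'a) set set" where
  "fundamental_loops n X S M = {L. is_loop n X L \<and> (\<exists>x\<in>S - M. x \<in> L \<and> L - {x} \<subseteq> M)}"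

lemma mem_fundamental_loops_iff:
  "L \<in> fundamental_loops n X S M \<longleftrightarrow> is_loop n X L \<and> (\<exists>x\<in>S - M. x \<in> L \<and> L \<subseteq> insert x M)"
  unfolding fundamental_loops_def by blast

lemma fundamental_loops_subset:
  "M \<subseteq> S \<Longrightarrow> L \<in> fundamental_loops n X S M \<Longrightarrow> L \<subseteq> S"
  unfolding mem_fundamental_loops_iff by blast

lemma ex1_point_of_fundamental_loop:
  "L \<in> fundamental_loops n X S M \<Longrightarrow> \<exists>!x\<in>S - M. x \<in> L"
  unfolding mem_fundamental_loops_iff by blast

lemma exists_loop_through:
  assumes "finite S" "S \<subseteq> PiE {..<n} X" "maximal_good n S M" "x \<in> S - M"
  shows "\<exists>L. is_loop n X L \<and> x \<in> L \<and> L \<subseteq> insert x M"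
proof -
  have M: "M \<subseteq> S" "good n M" "finite M" and "\<not> good n (insert x M)"
    using assms(1,3,4) finite_subset unfolding maximal_good_def by blast+
  have T: "finite (insert x M)" "insert x M \<subseteq> PiE {..<n} X"
    using M(1,3) assms(2,4) by auto
  obtain \<mu> where "\<mu> \<in> U_perp n (insert x M)" "\<mu> x = 1"
    using U_perp_insert_if_not_good M(2,3) \<open>\<not> good n (insert x M)\<close> by blast
  then have "real_vanishes n X \<mu> (insert x M)"
    using U_perp_iff_real_vanishes[OF T] by blast
  then have "\<exists>K\<subseteq>insert x M. x \<in> K \<and> has_vanishing_coeffs n X K"
    using has_vanishing_coeffs_if_real_vanishes[of "insert x M" n X \<mu> x] T(1) \<open>\<mu> x = 1\<close> by blast
  then obtain K where K: "K \<subseteq> insert x M" "x \<in> K" "has_vanishing_coeffs n X K"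
    by blast
  moreover have "finite K"
    using T(1) K(1) finite_subset by blast
  ultimately obtain L where L: "L \<subseteq> K" "is_loop n X L"
    using exists_loop_subset[of K n X] by blast
  have "x \<in> L"
  proof (rule ccontr)
    assume "x \<notin> L"
    then have "good n L"
      using good_subset M(2) L(1) K(1) by blast
    moreover note is_loopD[OF L(2)]
    ultimately show False
      using not_good_if_has_vanishing_coeffs L(1) K(1) T(2) by blast
  qed
  with L K(1) show ?thesis
    by blast
qed

lemma fundamental_loop_measure:
  assumes "finite S" "S \<subseteq> PiE {..<n} X" "M \<subseteq> S"
    and "L \<in> fundamental_loops n X S M" "is_loop_measure n X L \<mu>"
  shows "\<mu> \<in> U_perp n S" "\<mu> y \<noteq> 0 \<longleftrightarrow> y \<in> L"
proof -
  have "finite L"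
    using assms(4) is_loopD(1) unfolding fundamental_loops_def by blast
  then show "\<mu> y \<noteq> 0 \<longleftrightarrow> y \<in> L"
    using is_loop_measure_nonzero_iff[OF assms(5)] by blast
  show "\<mu> \<in> U_perp n S"
    using is_loop_measure_in_U_perp[OF assms(5,1,2) fundamental_loops_subset[OF assms(3,4)]] .
qed

lemma ex1_fundamental_loop:
  assumes "finite S" "S \<subseteq> PiE {..<n} X" "maximal_good n S M" "x \<in> S - M"
  shows "\<exists>!L\<in>fundamental_loops n X S M. x \<in> L"
proof -
  have M: "M \<subseteq> S" "good n M"
    using assms(3) unfolding maximal_good_def by blast+
  obtain L where L: "is_loop n X L" "x \<in> L" "L \<subseteq> insert x M"
    using exists_loop_through[OF assms] by blast
  show ?thesis
  proof (rule ex1I)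
    show "L \<in> fundamental_loops n X S M \<and> x \<in> L"
      using L assms(4) unfolding mem_fundamental_loops_iff by blast
  next
    fix L' assume "L' \<in> fundamental_loops n X S M \<and> x \<in> L'"
    then have "is_loop n X L'" "x \<in> L'" "L' \<subseteq> insert x M"
      using assms(4) unfolding mem_fundamental_loops_iff by blast+
    then show "L' = L"
      using has_vanishing_coeffs_insert_good_unique[OF assms(1,2) M assms(4)] L is_loopD(3) by blast
  qed
qed

theorem theorem4:
  fixes n :: nat and X :: "nat \<Rightarrow> 'a set"
    and S M :: "(nat \<Rightarrow> 'a) set"
    and \<sigma> :: "(nat \<Rightarrow> 'a) set \<Rightarrow> ((nat \<Rightarrow> 'a) \<Rightarrow> real)"
  assumes "\<forall>i<n. X i \<noteq> {}"
    and "S \<subseteq> PiE {..<n} X" and "finite S"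
    and "maximal_good n S M"
  defines "Loops \<equiv> {L. is_loop n X L \<and> (\<exists>x\<in>S - M. x \<in> L \<and> L - {x} \<subseteq> M)}"
  assumes "\<forall>L\<in>Loops. is_loop_measure n X L (\<sigma> L)"
  shows "vector_space.dim fscale (U_perp n S) = card S - card M
    \<and> \<sigma> ` Loops \<subseteq> U_perp n S
    \<and> \<not> module.dependent fscale (\<sigma> ` Loops)
    \<and> module.span fscale (\<sigma> ` Loops) = U_perp n S"
proof -
  have M: "M \<subseteq> S" "good n M"
    using assms(4) unfolding maximal_good_def by blast+
  have Loops: "Loops = fundamental_loops n X S M"
    unfolding Loops_def fundamental_loops_def ..
  have \<sigma>_perp: "\<sigma> L \<in> U_perp n S" and \<sigma>_nonzero: "\<sigma> L y \<noteq> 0 \<longleftrightarrow> y \<in> L" if "L \<in> Loops" for L y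
    using fundamental_loop_measure[OF assms(3,2) M(1)] that assms(6) unfolding Loops by blast+
  interpret pivot_family Loops "S - M" \<sigma>
  proof
    show "finite (S - M)"
      using assms(3) by blast
    show "\<exists>!p\<in>S - M. \<sigma> L p \<noteq> 0" if "L \<in> Loops" for L
      using ex1_point_of_fundamental_loop that \<sigma>_nonzero[OF that] unfolding Loops by simp
    show "\<exists>!L\<in>Loops. \<sigma> L p \<noteq> 0" if "p \<in> S - M" for p
      using ex1_fundamental_loop[OF assms(3,2,4) that] \<sigma>_nonzero unfolding Loops Ex1_def by blast
  qed
  have "\<And>\<mu>. \<mu> \<in> U_perp n S \<Longrightarrow> \<forall>x\<in>S - M. \<mu> x = 0 \<Longrightarrow> \<mu> = 0"
    using U_perp_eq_0_if_vanishes_off_good assms(3) M by blast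
  moreover have "\<sigma> ` Loops \<subseteq> U_perp n S"
    using \<sigma>_perp by blast
  ultimately show ?thesis
    using independent span_eq[OF subspace_U_perp] dim_eq[OF subspace_U_perp]
      card_Diff_subset[OF finite_subset[OF M(1) assms(3)] M(1)] by simp
qed

end
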